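(* Let $X$ be a definable set in $(Z,R)^{eq}$ which is both $Z$-internal and $R$-internal. Then $X$ is finite.
   Context: Let $\mathfrak C$ be a monster model, $Z,R$ definable subsets of $\mathfrak C$ which are stably embedded (subsets of $Z^n$, resp. $R^n$, definable with parameters from $\mathfrak C$ are definable with parameters from $Z$, resp. $R$) and fully orthogonal (for all $m,n$, every definable subset of $Z^m\times R^n$ is a finite union of sets $U\times V$ with $U\subseteq Z^m$, $V\subseteq R^n$ definable). $(Z,R)^{eq}$ is the two-sorted structure $(Z,R)$ (no connection between the sorts) expanded by all imaginary sorts; "definable" means definable in $(Z,R)^{eq}$ with parameters. A definable set $X$ is $Z$-internal (resp. $R$-internal) if there is a definable surjection from $Z^k$ (resp. $R^k$) onto $X$ for some $k$. *)

theory Defs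
  imports Main
begin

datatype 'r fm =
    Eq nat nat
  | Rel 'r "nat list"
  | Neg "'r fm"
  | Conj "'r fm" "'r fm"
  | Ex nat "'r fm"

primrec fv :: "'r fm \<Rightarrow> nat set" where
  "fv (Eq i j) = {i, j}"
| "fv (Rel r is) = set is"
| "fv (Neg \<phi>) = fv \<phi>"
| "fv (Conj \<phi> \<psi>) = fv \<phi> \<union> fv \<psi>"
| "fv (Ex x \<phi>) = fv \<phi> - {x}"

definition fo_structure :: "'a set \<Rightarrow> ('r \<Rightarrow> 'a list set) \<Rightarrow> bool" where
  "fo_structure M I \<longleftrightarrow> M \<noteq> {} \<and> (\<forall>r. \<forall>xs \<in> I r. set xs \<subseteq> M)"

primrec sat :: "'a set \<Rightarrow> ('r \<Rightarrow> 'a list set) \<Rightarrow> 'r fm \<Rightarrow> (nat \<Rightarrow> 'a) \<Rightarrow> bool" where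
  "sat M I (Eq i j) v = (v i = v j)"
| "sat M I (Rel r is) v = (map v is \<in> I r)"
| "sat M I (Neg \<phi>) v = (\<not> sat M I \<phi> v)"
| "sat M I (Conj \<phi> \<psi>) v = (sat M I \<phi> v \<and> sat M I \<psi> v)"
| "sat M I (Ex x \<phi>) v = (\<exists>a\<in>M. sat M I \<phi> (v(x := a)))"

definition lists_of :: "nat \<Rightarrow> 'a set \<Rightarrow> 'a list set" where
  "lists_of n A = {xs. length xs = n \<and> set xs \<subseteq> A}"

definition env :: "nat \<Rightarrow> 'a list \<Rightarrow> (nat \<Rightarrow> 'a) \<Rightarrow> nat \<Rightarrow> 'a" where
  "env n xs p = (\<lambda>i. if i < n then xs ! i else p i)"

text \<open>S \<subseteq> M^n is definable with parameters from A: variables 0..n-1 are the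
  tuple variables, all other free variables are parameters taken from A.\<close>
definition def_over :: "'a set \<Rightarrow> ('r \<Rightarrow> 'a list set) \<Rightarrow> 'a set \<Rightarrow> nat \<Rightarrow> 'a list set \<Rightarrow> bool" where
  "def_over M I A n S \<longleftrightarrow>
     (\<exists>(\<phi>::'r fm) p. (\<forall>i. p i \<in> M) \<and> (\<forall>i\<in>fv \<phi>. n \<le> i \<longrightarrow> p i \<in> A) \<and>
        S = {xs \<in> lists_of n M. sat M I \<phi> (env n xs p)})"

definition definable :: "'a set \<Rightarrow> ('r \<Rightarrow> 'a list set) \<Rightarrow> nat \<Rightarrow> 'a list set \<Rightarrow> bool" where
  "definable M I n S \<longleftrightarrow> def_over M I M n S"

definition definable_subset :: "'a set \<Rightarrow> ('r \<Rightarrow> 'a list set) \<Rightarrow> 'a set \<Rightarrow> bool" where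
  "definable_subset M I Z \<longleftrightarrow> Z \<subseteq> M \<and> definable M I 1 {[z] | z. z \<in> Z}"

definition stably_embedded :: "'a set \<Rightarrow> ('r \<Rightarrow> 'a list set) \<Rightarrow> 'a set \<Rightarrow> bool" where
  "stably_embedded M I Z \<longleftrightarrow>
     (\<forall>n S. S \<subseteq> lists_of n Z \<longrightarrow> definable M I n S \<longrightarrow> def_over M I Z n S)"

definition appset :: "'a list set \<Rightarrow> 'a list set \<Rightarrow> 'a list set" where
  "appset U V = {xs @ ys | xs ys. xs \<in> U \<and> ys \<in> V}"

definition fully_orthogonal :: "'a set \<Rightarrow> ('r \<Rightarrow> 'a list set) \<Rightarrow> 'a set \<Rightarrow> 'a set \<Rightarrow> bool" where
  "fully_orthogonal M I Z R \<longleftrightarrow>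
     (\<forall>m n S. S \<subseteq> appset (lists_of m Z) (lists_of n R) \<longrightarrow> definable M I (m + n) S \<longrightarrow>
        (\<exists>F. finite F \<and>
             (\<forall>(U, V)\<in>F. U \<subseteq> lists_of m Z \<and> definable M I m U \<and>
                          V \<subseteq> lists_of n R \<and> definable M I n V) \<and>
             S = (\<Union>(U, V)\<in>F. appset U V)))"

text \<open>A definable set of (Z,R)^eq, presented as D/E: D a definable subset of the
  sort Z^m x R^n (tuples xs @ ys), E a definable equivalence relation on D.\<close>
definition ZR_interpretable ::
  "'a set \<Rightarrow> ('r \<Rightarrow> 'a list set) \<Rightarrow> 'a set \<Rightarrow> 'a set \<Rightarrow> nat \<Rightarrow> nat \<Rightarrow> 'a list set \<Rightarrow> ('a list \<times> 'a list) set \<Rightarrow> bool" where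
  "ZR_interpretable M I Z R m n D E \<longleftrightarrow>
     D \<subseteq> appset (lists_of m Z) (lists_of n R) \<and> definable M I (m + n) D \<and>
     equiv D E \<and> definable M I (2 * (m + n)) {d @ d' | d d'. (d, d') \<in> E}"

text \<open>There is a definable surjection f : T^k \<rightarrow> D/E; its graph is given by the
  (E-invariant) definable set G of tuples as @ d with f(as) = [d]_E.\<close>
definition internal_via ::
  "'a set \<Rightarrow> ('r \<Rightarrow> 'a list set) \<Rightarrow> 'a set \<Rightarrow> nat \<Rightarrow> nat \<Rightarrow> nat \<Rightarrow> 'a list set \<Rightarrow> ('a list \<times> 'a list) set \<Rightarrow> bool" where
  "internal_via M I T m n k D E \<longleftrightarrow>
     (\<exists>G. G \<subseteq> appset (lists_of k T) D \<and> definable M I (k + (m + n)) G \<and>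
          (\<forall>as\<in>lists_of k T. \<exists>d\<in>D. {d'. as @ d' \<in> G} = E `` {d}) \<and>
          (\<forall>d\<in>D. \<exists>as\<in>lists_of k T. as @ d \<in> G))"

definition internal ::
  "'a set \<Rightarrow> ('r \<Rightarrow> 'a list set) \<Rightarrow> 'a set \<Rightarrow> nat \<Rightarrow> nat \<Rightarrow> 'a list set \<Rightarrow> ('a list \<times> 'a list) set \<Rightarrow> bool" where
  "internal M I T m n D E \<longleftrightarrow> (\<exists>k. internal_via M I T m n k D E)"

end

(* Write X = D // E. Internality gives definable surjections f : Z^k \<rightarrow> X and g : R^l \<rightarrow> X,
   namely xs \<mapsto> fibre G xs and ys \<mapsto> fibre H ys for the graphs G, H. The set of pairs (xs, ys)
   with f xs = g ys is definable in Z^k \<times> R^l, so by full orthogonality it is a finite union of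
   rectangles U \<times> V. On such a rectangle f xs = g ys = f xs' for all xs, xs' \<in> U and ys \<in> V, so each
   rectangle yields a single point of X, and every point of X is f xs = g ys for some pair. *)

theory Submission
  imports Defs
begin

primrec ren :: "(nat \<Rightarrow> nat) \<Rightarrow> 'r fm \<Rightarrow> 'r fm" where
  "ren s (Eq i j) = Eq (s i) (s j)"
| "ren s (Rel r is) = Rel r (map s is)"
| "ren s (Neg \<phi>) = Neg (ren s \<phi>)"
| "ren s (Conj \<phi> \<psi>) = Conj (ren s \<phi>) (ren s \<psi>)"
| "ren s (Ex x \<phi>) = Ex (s x) (ren s \<phi>)"

lemma sat_ren: "inj s \<Longrightarrow> sat M I (ren s \<phi>) v = sat M I \<phi> (v \<circ> s)"
  by (induction \<phi> arbitrary: v) (simp_all add: comp_def fun_upd_def inj_eq)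

primrec exs :: "nat list \<Rightarrow> 'r fm \<Rightarrow> 'r fm" where
  "exs [] \<phi> = \<phi>"
| "exs (x # xs) \<phi> = Ex x (exs xs \<phi>)"

lemma sat_exs: "sat M I (exs xs \<phi>) v \<longleftrightarrow>
   (\<exists>w. (\<forall>i. i \<notin> set xs \<longrightarrow> w i = v i) \<and> (\<forall>i\<in>set xs. w i \<in> M) \<and> sat M I \<phi> w)"
proof (induction xs arbitrary: v)
  case Nil
  have "(\<forall>i. w i = v i) \<longleftrightarrow> w = v" for w :: "nat \<Rightarrow> 'a" by auto
  then show ?case by simp
next
  case (Cons x xs)
  show ?case (is "?L \<longleftrightarrow> ?R")
  proof
    assume ?L
    then obtain a where a: "a \<in> M" "sat M I (exs xs \<phi>) (v(x := a))"
      by auto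
    then obtain w where w: "\<forall>i. i \<notin> set xs \<longrightarrow> w i = (v(x := a)) i"
      "\<forall>i\<in>set xs. w i \<in> M" "sat M I \<phi> w"
      unfolding Cons.IH by blast
    have "\<forall>i\<in>set (x # xs). w i \<in> M"
      using a(1) w(1,2) by (metis fun_upd_same set_ConsD)
    moreover have "\<forall>i. i \<notin> set (x # xs) \<longrightarrow> w i = v i"
      using w(1) by simp
    ultimately show ?R
      using w(3) by blast
  next
    assume ?R
    then obtain w where w: "\<forall>i. i \<notin> set (x # xs) \<longrightarrow> w i = v i"
      "\<forall>i\<in>set (x # xs). w i \<in> M" "sat M I \<phi> w"
      by blast
    have "sat M I (exs xs \<phi>) (v(x := w x))"
      unfolding Cons.IH using w by (intro exI[of _ w]) auto
    then show ?L
      using w(2) by auto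
  qed
qed

lemma env_append:
  assumes "length xs = n" "length ys = N"
  shows "env (n + N) (xs @ ys) p = (\<lambda>i. if n \<le> i \<and> i < n + N then ys ! (i - n) else env n xs p i)"
  using assms by (auto simp: env_def nth_append fun_eq_iff)

lemma sat_exs_upt:
  assumes "length xs = n"
  shows "sat M I (exs [n..<n + N] \<phi>) (env n xs p) \<longleftrightarrow>
    (\<exists>ys\<in>lists_of N M. sat M I \<phi> (env (n + N) (xs @ ys) p))"
proof
  assume "sat M I (exs [n..<n + N] \<phi>) (env n xs p)"
  then obtain w where w: "\<forall>i. i \<notin> {n..<n + N} \<longrightarrow> w i = env n xs p i"
    "\<forall>i\<in>{n..<n + N}. w i \<in> M" "sat M I \<phi> w"
    unfolding sat_exs by auto
  define ys where "ys = map w [n..<n + N]"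
  have "env (n + N) (xs @ ys) p = w"
    using assms w(1) by (auto simp: env_append ys_def fun_eq_iff)
  moreover have "ys \<in> lists_of N M"
    using w(2) by (auto simp: ys_def lists_of_def)
  ultimately show "\<exists>ys\<in>lists_of N M. sat M I \<phi> (env (n + N) (xs @ ys) p)"
    using w(3) by auto
next
  assume "\<exists>ys\<in>lists_of N M. sat M I \<phi> (env (n + N) (xs @ ys) p)"
  then obtain ys where "length ys = N" "\<forall>i<N. ys ! i \<in> M" "sat M I \<phi> (env (n + N) (xs @ ys) p)"
    by (auto simp: lists_of_def dest: nth_mem)
  then show "sat M I (exs [n..<n + N] \<phi>) (env n xs p)"
    unfolding sat_exs using assms
    by (intro exI[of _ "env (n + N) (xs @ ys) p"]) (auto simp: env_append)
qed

lemma definable_iff: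
  "definable M I n S \<longleftrightarrow>
     (\<exists>(\<phi>::'r fm) p. (\<forall>i. p i \<in> M) \<and> S = {xs \<in> lists_of n M. sat M I \<phi> (env n xs p)})"
  unfolding definable_def def_over_def by blast

lemma definable_Int:
  fixes I :: "'r \<Rightarrow> 'a list set"
  assumes "definable M I n S" "definable M I n T"
  shows "definable M I n (S \<inter> T)"
proof -
  obtain \<phi> :: "'r fm" and p where p: "\<forall>i. p i \<in> M" and S: "S = {xs \<in> lists_of n M. sat M I \<phi> (env n xs p)}"
    using assms(1) unfolding definable_iff by blast
  obtain \<psi> :: "'r fm" and q where q: "\<forall>i. q i \<in> M" and T: "T = {xs \<in> lists_of n M. sat M I \<psi> (env n xs q)}"
    using assms(2) unfolding definable_iff by blast
  \<comment> \<open>The parameters of \<phi> and \<psi> are moved to the even resp. odd variables, so they cannot clash.\<close>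
  define s where "s = (\<lambda>i. if i < n then i else 2 * i)"
  define t where "t = (\<lambda>i. if i < n then i else Suc (2 * i))"
  define r where "r = (\<lambda>j. if even j then p (j div 2) else q (j div 2))"
  have "inj s" "inj t" unfolding inj_def s_def t_def by auto
  moreover have "env n xs r \<circ> s = env n xs p" "env n xs r \<circ> t = env n xs q" for xs :: "'a list"
    by (auto simp: fun_eq_iff env_def s_def t_def r_def)
  ultimately have "S \<inter> T = {xs \<in> lists_of n M. sat M I (Conj (ren s \<phi>) (ren t \<psi>)) (env n xs r)}"
    unfolding S T by (auto simp: sat_ren)
  moreover have "\<forall>j. r j \<in> M" using p q unfolding r_def by auto
  ultimately show ?thesis unfolding definable_iff by blast
qed

lemma definable_reindex:
  fixes I :: "'r \<Rightarrow> 'a list set"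
  assumes "definable M I n' S" "inj_on \<sigma> {..<n'}" "\<sigma> ` {..<n'} \<subseteq> {..<n}"
  shows "definable M I n {xs \<in> lists_of n M. map (\<lambda>i. xs ! \<sigma> i) [0..<n'] \<in> S}"
proof -
  obtain \<phi> :: "'r fm" and p where p: "\<forall>i. p i \<in> M" and S: "S = {ys \<in> lists_of n' M. sat M I \<phi> (env n' ys p)}"
    using assms(1) unfolding definable_iff by blast
  \<comment> \<open>The parameters of \<phi> are moved above the n new tuple variables.\<close>
  define s where "s = (\<lambda>i. if i < n' then \<sigma> i else n + i)"
  define q where "q = (\<lambda>j. p (j - n))"
  have \<sigma>_lt: "\<sigma> i < n" if "i < n'" for i
    using assms(3) that by auto
  then have "inj s"
    using assms(2) unfolding inj_def s_def inj_on_def by (metis add_diff_cancel_left' lessThan_iff not_add_less1)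
  have "env n xs q \<circ> s = env n' (map (\<lambda>i. xs ! \<sigma> i) [0..<n']) p" for xs :: "'a list"
    using \<sigma>_lt by (auto simp: fun_eq_iff env_def s_def q_def)
  moreover have "map (\<lambda>i. xs ! \<sigma> i) [0..<n'] \<in> lists_of n' M" if "xs \<in> lists_of n M" for xs
    using that \<sigma>_lt by (auto simp: lists_of_def dest: nth_mem)
  ultimately have "{xs \<in> lists_of n M. map (\<lambda>i. xs ! \<sigma> i) [0..<n'] \<in> S}
      = {xs \<in> lists_of n M. sat M I (ren s \<phi>) (env n xs q)}"
    unfolding S by (auto simp: sat_ren[OF \<open>inj s\<close>])
  moreover have "\<forall>j. q j \<in> M" using p unfolding q_def by auto
  ultimately show ?thesis unfolding definable_iff by blast
qed

lemma definable_project: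
  fixes I :: "'r \<Rightarrow> 'a list set"
  assumes "definable M I (n + N) S"
  shows "definable M I n {xs. \<exists>ys\<in>lists_of N M. xs @ ys \<in> S}"
proof -
  obtain \<phi> :: "'r fm" and p where p: "\<forall>i. p i \<in> M"
    and S: "S = {zs \<in> lists_of (n + N) M. sat M I \<phi> (env (n + N) zs p)}"
    using assms unfolding definable_iff by blast
  have "xs @ ys \<in> lists_of (n + N) M \<longleftrightarrow> xs \<in> lists_of n M" if "ys \<in> lists_of N M" for xs ys
    using that by (auto simp: lists_of_def)
  then have "{xs. \<exists>ys\<in>lists_of N M. xs @ ys \<in> S}
      = {xs \<in> lists_of n M. sat M I (exs [n..<n + N] \<phi>) (env n xs p)}"
    unfolding S by (auto simp: sat_exs_upt lists_of_def)
  with p show ?thesis unfolding definable_iff by blast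
qed

lemma map_nth_append_shift:
  assumes "length xs = k + l" "length ys = N"
  shows "map (\<lambda>i. (xs @ ys) ! (if i < k then i else l + i)) [0..<k + N] = take k xs @ ys"
    and "map (\<lambda>i. (xs @ ys) ! (k + i)) [0..<l + N] = drop k xs @ ys"
  using assms by (auto intro!: nth_equalityI simp: nth_append add.commute)

lemma definable_join:
  fixes I :: "'r \<Rightarrow> 'a list set"
  assumes "definable M I (k + N) G" "definable M I (l + N) H"
  shows "definable M I (k + l)
    {xs \<in> lists_of (k + l) M. \<exists>ys\<in>lists_of N M. take k xs @ ys \<in> G \<and> drop k xs @ ys \<in> H}"
proof -
  define \<sigma> where "\<sigma> = (\<lambda>i::nat. if i < k then i else l + i)"
  define \<tau> where "\<tau> = (\<lambda>i::nat. k + i)"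
  define G' where "G' = {zs \<in> lists_of (k + l + N) M. map (\<lambda>i. zs ! \<sigma> i) [0..<k + N] \<in> G}"
  define H' where "H' = {zs \<in> lists_of (k + l + N) M. map (\<lambda>i. zs ! \<tau> i) [0..<l + N] \<in> H}"
  have "definable M I (k + l + N) G'"
    unfolding G'_def using assms(1) by (rule definable_reindex) (auto simp: \<sigma>_def inj_on_def)
  moreover have "definable M I (k + l + N) H'"
    unfolding H'_def using assms(2) by (rule definable_reindex) (auto simp: \<tau>_def inj_on_def)
  ultimately have "definable M I (k + l) {xs. \<exists>ys\<in>lists_of N M. xs @ ys \<in> G' \<inter> H'}"
    by (intro definable_project definable_Int)
  moreover have "xs @ ys \<in> G' \<inter> H' \<longleftrightarrow>
      xs \<in> lists_of (k + l) M \<and> take k xs @ ys \<in> G \<and> drop k xs @ ys \<in> H"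
    if "ys \<in> lists_of N M" for xs ys
    using that map_nth_append_shift[of xs k l ys N]
    by (auto simp: G'_def H'_def \<sigma>_def \<tau>_def lists_of_def)
  then have "{xs. \<exists>ys\<in>lists_of N M. xs @ ys \<in> G' \<inter> H'} =
      {xs \<in> lists_of (k + l) M. \<exists>ys\<in>lists_of N M. take k xs @ ys \<in> G \<and> drop k xs @ ys \<in> H}"
    by blast
  ultimately show ?thesis
    by simp
qed

lemma append_mem_appset_iff:
  "length xs = k \<Longrightarrow> xs @ ys \<in> appset (lists_of k A) B \<longleftrightarrow> xs \<in> lists_of k A \<and> ys \<in> B"
  by (auto simp: appset_def lists_of_def)

lemma appset_lists_of_subset:
  "A \<subseteq> C \<Longrightarrow> B \<subseteq> C \<Longrightarrow> appset (lists_of m A) (lists_of n B) \<subseteq> lists_of (m + n) C"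
  by (fastforce simp: appset_def lists_of_def)

lemma appset_eq_image: "appset U V = (\<lambda>(xs, ys). xs @ ys) ` (U \<times> V)"
  by (auto simp: appset_def)

lemma inj_on_append_lists_of: "inj_on (\<lambda>(xs, ys). xs @ ys) (lists_of k A \<times> B)"
  by (auto simp: inj_on_def lists_of_def)

lemma fully_orthogonal_rectangles:
  assumes "fully_orthogonal M I Z R" "S \<subseteq> lists_of m Z \<times> lists_of n R"
    and "definable M I (m + n) ((\<lambda>(xs, ys). xs @ ys) ` S)"
  shows "\<exists>F. finite F \<and> S = (\<Union>(U, V)\<in>F. U \<times> V)"
proof -
  let ?app = "\<lambda>(xs, ys). xs @ ys :: 'a list"
  have "?app ` S \<subseteq> appset (lists_of m Z) (lists_of n R)"
    using assms(2) by (auto simp: appset_eq_image)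
  from assms(1)[unfolded fully_orthogonal_def, rule_format, OF this assms(3)]
  obtain F where F: "finite F"
    "\<forall>(U, V)\<in>F. U \<subseteq> lists_of m Z \<and> definable M I m U \<and> V \<subseteq> lists_of n R \<and> definable M I n V"
    "?app ` S = (\<Union>(U, V)\<in>F. appset U V)"
    by blast
  have "?app ` (\<Union>(U, V)\<in>F. U \<times> V) = (\<Union>(U, V)\<in>F. appset U V)"
    unfolding appset_eq_image image_UN by (simp add: case_prod_unfold)
  with F(3) have "?app ` S = ?app ` (\<Union>(U, V)\<in>F. U \<times> V)"
    by simp
  moreover have "(\<Union>(U, V)\<in>F. U \<times> V) \<subseteq> lists_of m Z \<times> lists_of n R"
    using F(2) by auto
  ultimately have "S = (\<Union>(U, V)\<in>F. U \<times> V)"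
    by (simp add: inj_on_image_eq_iff[OF inj_on_append_lists_of assms(2)])
  with F(1) show ?thesis by blast
qed

lemma finite_if_rectangle_cover:
  assumes "finite F" "{(a, b) \<in> A \<times> B. f a = g b} = (\<Union>(U, V)\<in>F. U \<times> V)"
    and "X \<subseteq> f ` A" "X \<subseteq> g ` B"
  shows "finite X"
proof -
  have "X \<subseteq> (\<lambda>(U, V). g (SOME b. b \<in> V)) ` F"
  proof
    fix x assume "x \<in> X"
    obtain a where "a \<in> A" "x = f a"
      using assms(3) \<open>x \<in> X\<close> by auto
    obtain b where "b \<in> B" "x = g b"
      using assms(4) \<open>x \<in> X\<close> by auto
    have "(a, b) \<in> (\<Union>(U, V)\<in>F. U \<times> V)"
      unfolding assms(2)[symmetric] using \<open>a \<in> A\<close> \<open>b \<in> B\<close> \<open>x = f a\<close> \<open>x = g b\<close> by simp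
    then obtain U V where UV: "(U, V) \<in> F" "a \<in> U" "b \<in> V"
      by auto
    have "(SOME b. b \<in> V) \<in> V"
      using UV(3) by (rule someI)
    with UV have "(a, SOME b. b \<in> V) \<in> (\<Union>(U, V)\<in>F. U \<times> V)"
      by blast
    then have "x = g (SOME b. b \<in> V)"
      unfolding assms(2)[symmetric] using \<open>x = f a\<close> by simp
    with UV(1) show "x \<in> (\<lambda>(U, V). g (SOME b. b \<in> V)) ` F"
      by (auto intro: image_eqI[of _ _ "(U, V)"])
  qed
  then show ?thesis
    by (rule finite_subset) (rule finite_imageI[OF assms(1)])
qed

definition fibre :: "'a list set \<Rightarrow> 'a list \<Rightarrow> 'a list set" where
  "fibre G xs = {ys. xs @ ys \<in> G}"

lemma quotient_eq_iff_meet: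
  assumes "equiv A r" "X \<in> A // r" "Y \<in> A // r"
  shows "X = Y \<longleftrightarrow> X \<inter> Y \<noteq> {}"
  using quotient_disj[OF assms] in_quotient_imp_non_empty[OF assms(1,2)] by auto

lemma internal_fibres:
  assumes "internal M I T m n D E" "equiv D E"
  obtains k G where "G \<subseteq> appset (lists_of k T) D" "definable M I (k + (m + n)) G"
    "fibre G ` lists_of k T = D // E"
proof -
  obtain k G where G: "G \<subseteq> appset (lists_of k T) D" "definable M I (k + (m + n)) G"
    "\<forall>xs\<in>lists_of k T. \<exists>d\<in>D. fibre G xs = E `` {d}"
    "\<forall>d\<in>D. \<exists>xs\<in>lists_of k T. d \<in> fibre G xs"
    using assms(1) unfolding internal_def internal_via_def fibre_def by auto
  have "fibre G ` lists_of k T \<subseteq> D // E"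
    using G(3) by (metis image_subsetI quotientI)
  moreover have "E `` {d} \<in> fibre G ` lists_of k T" if "d \<in> D" for d
  proof -
    obtain xs e where "xs \<in> lists_of k T" "d \<in> fibre G xs" "e \<in> D" "fibre G xs = E `` {e}"
      using G(3,4) \<open>d \<in> D\<close> by metis
    moreover from this have "E `` {e} = E `` {d}"
      using equiv_class_eq[OF assms(2)] by auto
    ultimately show ?thesis by auto
  qed
  ultimately have "fibre G ` lists_of k T = D // E"
    by (auto elim!: quotientE)
  with G(1,2) show ?thesis by (rule that)
qed

lemma append_image_equal_fibres:
  assumes "equiv D E" "D \<subseteq> lists_of N M" "A \<subseteq> M" "B \<subseteq> M"
    and G: "G \<subseteq> appset (lists_of k A) D" "fibre G ` lists_of k A \<subseteq> D // E"
    and H: "H \<subseteq> appset (lists_of l B) D" "fibre H ` lists_of l B \<subseteq> D // E"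
  shows "(\<lambda>(xs, ys). xs @ ys) ` {(xs, ys) \<in> lists_of k A \<times> lists_of l B. fibre G xs = fibre H ys}
    = {zs \<in> lists_of (k + l) M. \<exists>d\<in>lists_of N M. take k zs @ d \<in> G \<and> drop k zs @ d \<in> H}"
    (is "?lhs = ?rhs")
proof -
  have meet: "fibre G xs = fibre H ys \<longleftrightarrow> (\<exists>d\<in>lists_of N M. xs @ d \<in> G \<and> ys @ d \<in> H)"
    if "xs \<in> lists_of k A" "ys \<in> lists_of l B" for xs ys
  proof -
    have "fibre G xs \<in> D // E" "fibre H ys \<in> D // E"
      using G(2) H(2) that by auto
    then have "fibre G xs = fibre H ys \<longleftrightarrow> fibre G xs \<inter> fibre H ys \<noteq> {}"
      by (rule quotient_eq_iff_meet[OF assms(1)])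
    also have "\<dots> \<longleftrightarrow> (\<exists>d\<in>lists_of N M. xs @ d \<in> G \<and> ys @ d \<in> H)"
    proof -
      have "length xs = k" using that(1) by (simp add: lists_of_def)
      then have "fibre G xs \<subseteq> lists_of N M"
        unfolding fibre_def using G(1) assms(2) append_mem_appset_iff[of xs k _ A D] by blast
      then show ?thesis by (auto simp: fibre_def)
    qed
    finally show ?thesis .
  qed
  show ?thesis
  proof
    show "?lhs \<subseteq> ?rhs"
    proof
      fix zs assume "zs \<in> ?lhs"
      then obtain xs ys where xs: "xs \<in> lists_of k A" and ys: "ys \<in> lists_of l B"
        and zs: "zs = xs @ ys" and eq: "fibre G xs = fibre H ys"
        by auto
      then have "zs \<in> lists_of (k + l) M" "take k zs = xs" "drop k zs = ys"
        using assms(3,4) by (auto simp: lists_of_def)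
      with meet[OF xs ys] eq show "zs \<in> ?rhs" by simp
    qed
  next
    show "?rhs \<subseteq> ?lhs"
    proof
      fix zs assume "zs \<in> ?rhs"
      then obtain d where zs: "length zs = k + l" and d: "d \<in> lists_of N M"
        "take k zs @ d \<in> G" "drop k zs @ d \<in> H"
        by (auto simp: lists_of_def)
      then have "take k zs \<in> lists_of k A" "drop k zs \<in> lists_of l B"
        using G(1) H(1) append_mem_appset_iff[of "take k zs" k] append_mem_appset_iff[of "drop k zs" l]
        by auto
      with meet d show "zs \<in> ?lhs"
        by (auto intro!: image_eqI[of _ _ "(take k zs, drop k zs)"])
    qed
  qed
qed

theorem lemma2p4:
  fixes M :: "'a set" and I :: "'r \<Rightarrow> 'a list set" and Z R :: "'a set"
    and m n :: nat and D :: "'a list set" and E :: "('a list \<times> 'a list) set"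
  assumes "fo_structure M I"
    and "definable_subset M I Z" and "definable_subset M I R"
    and "stably_embedded M I Z" and "stably_embedded M I R"
    and "fully_orthogonal M I Z R"
    and "ZR_interpretable M I Z R m n D E"
    and "internal M I Z m n D E"
    and "internal M I R m n D E"
  shows "finite (D // E)"
proof -
  have eqv: "equiv D E" and D: "D \<subseteq> appset (lists_of m Z) (lists_of n R)"
    using assms(7) unfolding ZR_interpretable_def by auto
  have ZM: "Z \<subseteq> M" and RM: "R \<subseteq> M"
    using assms(2,3) unfolding definable_subset_def by auto
  have DM: "D \<subseteq> lists_of (m + n) M"
    using D appset_lists_of_subset[OF ZM RM] by (rule order_trans)
  obtain k G where G: "G \<subseteq> appset (lists_of k Z) D" "definable M I (k + (m + n)) G"
    "fibre G ` lists_of k Z = D // E"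
    using assms(8) eqv by (rule internal_fibres)
  obtain l H where H: "H \<subseteq> appset (lists_of l R) D" "definable M I (l + (m + n)) H"
    "fibre H ` lists_of l R = D // E"
    using assms(9) eqv by (rule internal_fibres)
  define S where "S = {(xs, ys) \<in> lists_of k Z \<times> lists_of l R. fibre G xs = fibre H ys}"
  have "(\<lambda>(xs, ys). xs @ ys) ` S = {zs \<in> lists_of (k + l) M.
      \<exists>d\<in>lists_of (m + n) M. take k zs @ d \<in> G \<and> drop k zs @ d \<in> H}"
    unfolding S_def
    by (rule append_image_equal_fibres[OF eqv DM ZM RM G(1) _ H(1)]) (simp_all add: G(3) H(3))
  with definable_join[OF G(2) H(2)]
  have S_definable: "definable M I (k + l) ((\<lambda>(xs, ys). xs @ ys) ` S)"
    by simp
  have S_sub: "S \<subseteq> lists_of k Z \<times> lists_of l R"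
    unfolding S_def by auto
  obtain F where "finite F" "S = (\<Union>(U, V)\<in>F. U \<times> V)"
    using fully_orthogonal_rectangles[OF assms(6) S_sub S_definable] by blast
  then show ?thesis
    unfolding S_def by (rule finite_if_rectangle_cover) (simp_all add: G(3) H(3))
qed

end
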